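(* In the setting below, for any set $\mathcal{F}$ of fixed possible edges and any input graph $G\in\mathcal{G}$, the random vertex sequence $W=W_0W_1\cdots W_n$ generated by one iteration of the Unweighted Graph Sampler (run until the first $n\ge 1$ with $W_n=W_0$) has finite expected length.
   Context: Setting (unweighted graphs). $V$ is a finite vertex set; graphs are either all directed or all undirected and have no multiple edges; $uv$ denotes the (possible) edge from $u$ to $v$ (for undirected graphs $uv=vu$). $G_0$ is a given graph on $V$ and $\mathcal{F}$ is a given subset of the possible edges on $V$. $\mathcal{G}$ is the set of all graphs $G$ on $V$ having the same degree sequence as $G_0$ (for directed graphs: the same in-degree and the same out-degree at every vertex) and satisfying $E(G)\cap\mathcal{F}=E(G_0)\cap\mathcal{F}$. The set of known edges is $\tilde{\mathcal{F}}=\{uv : uv\in E(G)\text{ for all }G\in\mathcal{G}, \text{ or } uv\notin E(G)\text{ for all }G\in\mathcal{G}\}$ (so $\mathcal{F}\subseteq\tilde{\mathcal{F}}$). For a graph $G$ and vertex $u$ define $N_G(u)=\{v\in V: vu\in E(G),\ vu\notin\tilde{\mathcal{F}}\}$ and $M_G(u)=\{v\in V: uv\notin E(G),\ uv\notin\tilde{\mathcal{F}}\}$. Unweighted Graph Sampler (one iteration, input $G\in\mathcal{G}$): set $W_{-1}=*$ (a dummy symbol), sample $W_0$ uniformly from $\{v\in V: N_G(v)\neq\emptyset\}$, set $n=0$; then repeat: sample $W_{n+1}$ uniformly from $N_G(W_n)\setminus\{W_{n-1}\}$; sample $W_{n+2}$ uniformly from $M_G(W_{n+1})$ (computed in the current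 graph $G$); delete the edge $W_{n+1}W_n$ from $E(G)$ and add the edge $W_{n+1}W_{n+2}$ to $E(G)$; set $n\leftarrow n+2$; until $W_n=W_0$. Output the current $G$. (Here $G$ always denotes the current, progressively modified, graph.) *)

theory Defs
  imports "HOL-Probability.Probability"
begin

text \<open>A directed edge uv is the
pair (u,v); an undirected graph is represented by a symmetric edge set (the edge uv = vu is
the two pairs (u,v),(v,u)).\<close>

type_synonym 'a graph = "('a \<times> 'a) set"

definition possible_edges :: "'a set \<Rightarrow> ('a \<times> 'a) set" where
  "possible_edges V = {(u,v). u \<in> V \<and> v \<in> V \<and> u \<noteq> v}"

definition is_graph :: "bool \<Rightarrow> 'a set \<Rightarrow> 'a graph \<Rightarrow> bool" where
  "is_graph directed V E \<longleftrightarrow> E \<subseteq> possible_edges V \<and> (\<not> directed \<longrightarrow> sym E)"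

definition indeg :: "'a graph \<Rightarrow> 'a \<Rightarrow> nat" where
  "indeg E v = card {u. (u,v) \<in> E}"

definition outdeg :: "'a graph \<Rightarrow> 'a \<Rightarrow> nat" where
  "outdeg E v = card {w. (v,w) \<in> E}"

text \<open>The class \<G>: same (in- and out-)degree at every vertex as G0, and agreeing with G0 on F.
For undirected (symmetric) graphs in- and out-degree both equal the degree.\<close>
definition graph_class :: "bool \<Rightarrow> 'a set \<Rightarrow> 'a graph \<Rightarrow> ('a \<times> 'a) set \<Rightarrow> 'a graph set" where
  "graph_class directed V G0 F =
     {G. is_graph directed V G \<and>
         (\<forall>v\<in>V. indeg G v = indeg G0 v \<and> outdeg G v = outdeg G0 v) \<and>
         G \<inter> F = G0 \<inter> F}"

definition known_edges :: "bool \<Rightarrow> 'a set \<Rightarrow> 'a graph \<Rightarrow> ('a \<times> 'a) set \<Rightarrow> ('a \<times> 'a) set" where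
  "known_edges directed V G0 F =
     {e \<in> possible_edges V. (\<forall>G\<in>graph_class directed V G0 F. e \<in> G) \<or>
                            (\<forall>G\<in>graph_class directed V G0 F. e \<notin> G)}"

definition Nset :: "bool \<Rightarrow> 'a set \<Rightarrow> 'a graph \<Rightarrow> ('a \<times> 'a) set \<Rightarrow> 'a graph \<Rightarrow> 'a \<Rightarrow> 'a set" where
  "Nset directed V G0 F G u =
     {v \<in> V. (v,u) \<in> G \<and> (v,u) \<notin> known_edges directed V G0 F}"

definition Mset :: "bool \<Rightarrow> 'a set \<Rightarrow> 'a graph \<Rightarrow> ('a \<times> 'a) set \<Rightarrow> 'a graph \<Rightarrow> 'a \<Rightarrow> 'a set" where
  "Mset directed V G0 F G u =
     {v \<in> V. (u,v) \<in> possible_edges V \<and> (u,v) \<notin> G \<and> (u,v) \<notin> known_edges directed V G0 F}"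

definition del_edge :: "bool \<Rightarrow> 'a graph \<Rightarrow> 'a \<times> 'a \<Rightarrow> 'a graph" where
  "del_edge directed E e = (if directed then E - {e} else E - {e, (snd e, fst e)})"

definition add_edge :: "bool \<Rightarrow> 'a graph \<Rightarrow> 'a \<times> 'a \<Rightarrow> 'a graph" where
  "add_edge directed E e = (if directed then insert e E else insert e (insert (snd e, fst e) E))"

text \<open>Arguments: W0, current graph G, W_{n-1} (None = the dummy *),
W_n, and the reversed list of vertices generated so far.
Uniform sampling from an empty set yields no result (lost mass), so a run that
gets stuck or never stops contributes to non-losslessness.\<close>
partial_function (spmf) sampler_loop ::
  "bool \<Rightarrow> 'a set \<Rightarrow> 'a graph \<Rightarrow> ('a \<times> 'a) set \<Rightarrow> 'a \<Rightarrow> 'a graph \<Rightarrow> 'a option \<Rightarrow> 'a \<Rightarrow> 'a list \<Rightarrow> 'a list spmf"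
where
  "sampler_loop directed V G0 F w0 G prev cur acc = do {
     w1 \<leftarrow> spmf_of_set (Nset directed V G0 F G cur - set_option prev);
     w2 \<leftarrow> spmf_of_set (Mset directed V G0 F G w1);
     let G' = add_edge directed (del_edge directed G (w1, cur)) (w1, w2);
     let acc' = w2 # w1 # acc;
     if w2 = w0 then return_spmf (rev acc')
     else sampler_loop directed V G0 F w0 G' (Some w1) w2 acc'
   }"

definition sampler_walk :: "bool \<Rightarrow> 'a set \<Rightarrow> 'a graph \<Rightarrow> ('a \<times> 'a) set \<Rightarrow> 'a graph \<Rightarrow> 'a list spmf" where
  "sampler_walk directed V G0 F G = do {
     w0 \<leftarrow> spmf_of_set {v \<in> V. Nset directed V G0 F G v \<noteq> {}};
     sampler_loop directed V G0 F w0 G None w0 [w0]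
   }"

end

theory Submission
  imports Defs
begin

text \<open>The repeat-loop of the sampler is a random walk on states (current graph, last two
  vertices). From every reachable state some choice of the next two vertices, made with
  probability at least 1/|V|^2, either closes the walk or brings the current graph one edge
  closer to a graph of the class that contains the edge just added. That distance is at most
  the number E of possible edges, so from any state the walk stops within E + 2 iterations with
  probability at least |V|^(-2(E+2)). Hence it stops almost surely, the number of iterations has
  a geometric tail, and the expected length of the walk is finite.\<close>

section \<open>Loops that stop with bounded-below probability\<close>

definition continue_loop :: "('s \<Rightarrow> 'r spmf) \<Rightarrow> 'r + 's \<Rightarrow> 'r spmf" where
  "continue_loop loop x = (case x of Inl r \<Rightarrow> return_spmf r | Inr s \<Rightarrow> loop s)"

fun run_steps :: "('s \<Rightarrow> ('r + 's) spmf) \<Rightarrow> nat \<Rightarrow> 's \<Rightarrow> ('r + 's) spmf" where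
  "run_steps body 0 s = return_spmf (Inr s)"
| "run_steps body (Suc n) s =
     body s \<bind> (\<lambda>x. case x of Inl r \<Rightarrow> return_spmf (Inl r) | Inr s' \<Rightarrow> run_steps body n s')"

lemma loop_eq_run_steps_bind:
  assumes loop_unfold: "\<And>s. loop s = body s \<bind> continue_loop loop"
  shows "loop s = run_steps body n s \<bind> continue_loop loop"
proof (induction n arbitrary: s)
  case 0
  show ?case by (simp add: continue_loop_def)
next
  case (Suc n)
  have "run_steps body (Suc n) s \<bind> continue_loop loop
      = body s \<bind> (\<lambda>x. (case x of Inl r \<Rightarrow> return_spmf (Inl r) | Inr s' \<Rightarrow> run_steps body n s')
                         \<bind> continue_loop loop)"
    by simp
  also have "\<dots> = body s \<bind> continue_loop loop"
    by (intro bind_spmf_cong refl) (simp add: continue_loop_def Suc[symmetric] split: sum.split)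
  finally show ?case by (simp add: loop_unfold[of s])
qed

lemma spmf_bind_ge: "spmf p x * spmf (f x) y \<le> spmf (p \<bind> f) y"
proof -
  have "ennreal (spmf p x * spmf (f x) y) = (\<integral>\<^sup>+ z. ennreal (spmf (f x) y) * indicator {x} z \<partial>measure_spmf p)"
    by (subst nn_integral_cmult_indicator)
       (simp_all add: emeasure_spmf_single ennreal_mult mult.commute)
  also have "\<dots> \<le> (\<integral>\<^sup>+ z. spmf (f z) y \<partial>measure_spmf p)"
    by (rule nn_integral_mono) (simp split: split_indicator)
  also have "\<dots> = ennreal (spmf (p \<bind> f) y)"
    by (simp add: ennreal_spmf_bind)
  finally show ?thesis by (simp add: ennreal_le_iff)
qed

lemma spmf_isl_run_steps_Suc_ge:
  "spmf (body s) x * spmf (map_spmf isl (case x of Inl r \<Rightarrow> return_spmf (Inl r)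
      | Inr s' \<Rightarrow> run_steps body n s')) True
    \<le> spmf (map_spmf isl (run_steps body (Suc n) s)) True"
  unfolding run_steps.simps(2) map_spmf_bind_spmf
  by (rule order_trans[OF _ spmf_bind_ge[where x = x]]) simp

lemma nn_integral_bind_spmf:
  "(\<integral>\<^sup>+ x. f x \<partial>measure_spmf (p \<bind> g)) = (\<integral>\<^sup>+ y. \<integral>\<^sup>+ x. f x \<partial>measure_spmf (g y) \<partial>measure_spmf p)"
  unfolding measure_spmf_bind o_def
  by (rule nn_integral_bind[where B = "count_space UNIV"]) (simp_all add: o_def)

lemma emeasure_space_measure_spmf:
  "emeasure (measure_spmf p) (space (measure_spmf p)) = ennreal (weight_spmf p)"
  by (simp add: measure_spmf.emeasure_eq_measure weight_spmf_def space_measure_spmf)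

lemma mult_weight_spmf_le: "(x :: ennreal) * ennreal (weight_spmf p) \<le> x"
  using mult_left_mono[of "ennreal (weight_spmf p)" 1 x] weight_spmf_le_1[of p] by simp

lemma emeasure_isl_spmf:
  "emeasure (measure_spmf p) {x. isl x} = ennreal (spmf (map_spmf isl p) True)"
  by (simp add: spmf_map measure_spmf.emeasure_eq_measure vimage_def)

lemma emeasure_not_isl_spmf:
  assumes "lossless_spmf p"
  shows "emeasure (measure_spmf p) {x. \<not> isl x} = ennreal (1 - spmf (map_spmf isl p) True)"
proof -
  have "{x. \<not> isl x} = space (measure_spmf p) - {x. isl x}"
    by (auto simp: space_measure_spmf)
  then have "measure (measure_spmf p) {x. \<not> isl x} = weight_spmf p - measure (measure_spmf p) {x. isl x}"
    by (simp add: measure_spmf.finite_measure_compl weight_spmf_def)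
  then show ?thesis
    using assms by (simp add: measure_spmf.emeasure_eq_measure lossless_weight_spmfD spmf_map vimage_def)
qed

lemma lossless_bind_nn_integral_finite:
  assumes "lossless_spmf p" and "\<And>x. x \<in> set_spmf p \<Longrightarrow> lossless_spmf (f x)"
    and "\<And>x. x \<in> set_spmf p \<Longrightarrow> (\<integral>\<^sup>+ y. g y \<partial>measure_spmf (f x)) \<le> ennreal B"
  shows "lossless_spmf (p \<bind> f) \<and> (\<integral>\<^sup>+ y. g y \<partial>measure_spmf (p \<bind> f)) < \<infinity>"
proof
  show "lossless_spmf (p \<bind> f)" using assms(1,2) by simp
  have "(\<integral>\<^sup>+ y. g y \<partial>measure_spmf (p \<bind> f)) \<le> (\<integral>\<^sup>+ x. ennreal B \<partial>measure_spmf p)"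
    unfolding nn_integral_bind_spmf using assms(3)
    by (intro nn_integral_mono_AE) (simp add: AE_measure_spmf_iff)
  also have "\<dots> < \<infinity>"
    by (simp add: emeasure_space_measure_spmf ennreal_mult_less_top)
  finally show "(\<integral>\<^sup>+ y. g y \<partial>measure_spmf (p \<bind> f)) < \<infinity>" .
qed

lemma ennreal_of_nat_eq_SUP_min: "(of_nat n :: ennreal) = (SUP K. of_nat (min n K))"
proof (rule antisym)
  show "(of_nat n :: ennreal) \<le> (SUP K. of_nat (min n K))"
    by (rule SUP_upper2[of n]) simp_all
qed (rule SUP_least, simp)

locale progress_loop =
  fixes body :: "'s \<Rightarrow> ('r + 's) spmf" and loop :: "'s \<Rightarrow> 'r spmf"
    and inv :: "'s \<Rightarrow> bool" and potential :: "'s \<Rightarrow> nat" and bound :: nat and q :: real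
  assumes loop_unfold: "\<And>s. loop s = body s \<bind> continue_loop loop"
    and inv_step: "\<And>s s'. inv s \<Longrightarrow> Inr s' \<in> set_spmf (body s) \<Longrightarrow> inv s'"
    and lossless_body: "\<And>s. inv s \<Longrightarrow> lossless_spmf (body s)"
    and progress: "\<And>s. inv s \<Longrightarrow>
       \<exists>x. q \<le> spmf (body s) x \<and> (case x of Inl _ \<Rightarrow> True | Inr s' \<Rightarrow> potential s' < potential s)"
    and potential_le: "\<And>s. inv s \<Longrightarrow> potential s \<le> bound"
    and q_pos: "0 < q"
begin

lemma q_le_1: "inv s \<Longrightarrow> q \<le> 1"
  using progress[of s] by (meson order_trans pmf_le_1)

lemma lossless_run_steps: "inv s \<Longrightarrow> lossless_spmf (run_steps body n s)"
proof (induction n arbitrary: s)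
  case (Suc n)
  then show ?case
    using lossless_body[OF Suc.prems] by (auto split: sum.splits intro: inv_step)
qed simp

lemma run_steps_inv: "inv s \<Longrightarrow> Inr s' \<in> set_spmf (run_steps body n s) \<Longrightarrow> inv s'"
proof (induction n arbitrary: s)
  case (Suc n)
  from Suc.prems(2) obtain t where "Inr t \<in> set_spmf (body s)" "Inr s' \<in> set_spmf (run_steps body n t)"
    by (auto simp: set_bind_spmf split: sum.splits) (metis sum.exhaust)
  then show ?case using Suc.IH inv_step[OF Suc.prems(1)] by blast
qed simp

lemma run_steps_stop_ge:
  "inv s \<Longrightarrow> potential s \<le> n \<Longrightarrow> q ^ Suc n \<le> spmf (map_spmf isl (run_steps body (Suc n) s)) True"
proof (induction n arbitrary: s)
  case 0
  obtain x where x: "q \<le> spmf (body s) x" "case x of Inl _ \<Rightarrow> True | Inr s' \<Rightarrow> potential s' < potential s"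
    using progress[OF 0(1)] by blast
  with 0 obtain r where "x = Inl r" by (cases x) auto
  then show ?case
    using spmf_isl_run_steps_Suc_ge[of body s x 0] x(1) by simp
next
  case (Suc n)
  obtain x where x: "q \<le> spmf (body s) x" "case x of Inl _ \<Rightarrow> True | Inr s' \<Rightarrow> potential s' < potential s"
    using progress[OF Suc.prems(1)] by blast
  note bind_ge = spmf_isl_run_steps_Suc_ge[of body s x "Suc n"]
  show ?case
  proof (cases x)
    case (Inl r)
    have "q ^ Suc (Suc n) \<le> q"
      using q_pos q_le_1[OF Suc.prems(1)] by (simp add: power_le_one mult_left_le mult_le_one)
    then show ?thesis using bind_ge x(1) Inl by simp
  next
    case (Inr s')
    have "x \<in> set_spmf (body s)" using x(1) q_pos by (simp add: in_set_spmf_iff_spmf)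
    then have "inv s'" using inv_step[OF Suc.prems(1)] Inr by simp
    moreover have "potential s' \<le> n" using x(2) Inr Suc.prems(2) by simp
    ultimately have "q ^ Suc n \<le> spmf (map_spmf isl (run_steps body (Suc n) s')) True"
      by (rule Suc.IH)
    then have "q * q ^ Suc n \<le> spmf (body s) x * spmf (map_spmf isl (run_steps body (Suc n) s')) True"
      using x(1) q_pos by (intro mult_mono) auto
    then show ?thesis using bind_ge Inr by simp
  qed
qed

lemma run_steps_bound_stop_ge:
  "inv s \<Longrightarrow> q ^ Suc bound \<le> spmf (map_spmf isl (run_steps body (Suc bound) s)) True"
  using run_steps_stop_ge potential_le by blast

lemma nn_integral_loop_run_steps:
  "(\<integral>\<^sup>+ r. f r \<partial>measure_spmf (loop s))
    = (\<integral>\<^sup>+ x. \<integral>\<^sup>+ r. f r \<partial>measure_spmf (continue_loop loop x) \<partial>measure_spmf (run_steps body n s))"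
  by (subst loop_eq_run_steps_bind[OF loop_unfold, of s n]) (rule nn_integral_bind_spmf)

lemma weight_loop_ge_step:
  assumes "inv s" and "0 \<le> \<mu>" "\<mu> \<le> 1" and mu_le: "\<And>t. inv t \<Longrightarrow> \<mu> \<le> weight_spmf (loop t)"
  shows "\<mu> + (1 - \<mu>) * q ^ Suc bound \<le> weight_spmf (loop s)"
proof -
  let ?S = "run_steps body (Suc bound) s"
  let ?P = "spmf (map_spmf isl ?S) True"
  have "weight_spmf ?S = 1"
    using lossless_run_steps[OF \<open>inv s\<close>] by (rule lossless_weight_spmfD)
  then have "ennreal (\<mu> + (1 - \<mu>) * ?P) = ennreal \<mu> * ennreal (weight_spmf ?S) + ennreal (1 - \<mu>) * ?P"
    using \<open>0 \<le> \<mu>\<close> \<open>\<mu> \<le> 1\<close>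
    by (simp add: ennreal_mult[symmetric] ennreal_plus[symmetric] del: ennreal_plus)
  also have "\<dots> = (\<integral>\<^sup>+ x. ennreal \<mu> + ennreal (1 - \<mu>) * indicator {x. isl x} x \<partial>measure_spmf ?S)"
    by (simp add: nn_integral_add nn_integral_cmult_indicator emeasure_space_measure_spmf emeasure_isl_spmf)
  also have "\<dots> \<le> (\<integral>\<^sup>+ x. \<integral>\<^sup>+ r. 1 \<partial>measure_spmf (continue_loop loop x) \<partial>measure_spmf ?S)"
  proof (rule nn_integral_mono_AE, unfold AE_measure_spmf_iff, intro ballI)
    fix x assume x: "x \<in> set_spmf ?S"
    show "ennreal \<mu> + ennreal (1 - \<mu>) * indicator {x. isl x} x
        \<le> (\<integral>\<^sup>+ r. 1 \<partial>measure_spmf (continue_loop loop x))"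
    proof (cases x)
      case (Inl r)
      then show ?thesis using \<open>0 \<le> \<mu>\<close> \<open>\<mu> \<le> 1\<close>
        by (simp add: emeasure_space_measure_spmf continue_loop_def ennreal_plus[symmetric] del: ennreal_plus)
    next
      case (Inr s')
      then have "inv s'" using run_steps_inv[OF \<open>inv s\<close>, of s'] x by blast
      then show ?thesis using Inr mu_le by (simp add: emeasure_space_measure_spmf continue_loop_def)
    qed
  qed
  also have "\<dots> = (\<integral>\<^sup>+ r. 1 \<partial>measure_spmf (loop s))"
    by (rule nn_integral_loop_run_steps[symmetric])
  also have "\<dots> = ennreal (weight_spmf (loop s))"
    by (simp add: emeasure_space_measure_spmf)
  finally have "\<mu> + (1 - \<mu>) * ?P \<le> weight_spmf (loop s)"
    by (simp add: ennreal_le_iff weight_spmf_nonneg)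
  moreover have "(1 - \<mu>) * q ^ Suc bound \<le> (1 - \<mu>) * ?P"
    using run_steps_bound_stop_ge[OF \<open>inv s\<close>] \<open>\<mu> \<le> 1\<close> by (intro mult_left_mono) auto
  ultimately show ?thesis by linarith
qed

text \<open>The infimum \<mu> of the weights over invariant states satisfies \<mu> + (1 - \<mu>) p \<le> \<mu> with p > 0.\<close>
theorem lossless_loop:
  assumes "inv s"
  shows "lossless_spmf (loop s)"
proof -
  define \<mu> where "\<mu> = (INF t\<in>Collect inv. weight_spmf (loop t))"
  have bdd: "bdd_below ((\<lambda>t. weight_spmf (loop t)) ` Collect inv)"
    by (rule bdd_belowI[of _ 0]) (auto simp: weight_spmf_nonneg)
  have mu_le: "\<mu> \<le> weight_spmf (loop t)" if "inv t" for t
    unfolding \<mu>_def using bdd that by (auto intro: cInf_lower)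
  have "0 \<le> \<mu>"
    unfolding \<mu>_def using assms by (auto intro!: cINF_greatest simp: weight_spmf_nonneg)
  have "\<mu> \<le> 1" using mu_le[OF assms] weight_spmf_le_1 order_trans by blast
  have "\<mu> + (1 - \<mu>) * q ^ Suc bound \<le> (INF t\<in>Collect inv. weight_spmf (loop t))"
    using assms weight_loop_ge_step[OF _ \<open>0 \<le> \<mu>\<close> \<open>\<mu> \<le> 1\<close> mu_le] by (intro cINF_greatest) auto
  then have "(1 - \<mu>) * q ^ Suc bound \<le> 0"
    by (simp add: \<mu>_def[symmetric])
  then have "1 \<le> \<mu>"
    using zero_less_power[OF q_pos, of "Suc bound"] mult_le_0_iff[of "1 - \<mu>" "q ^ Suc bound"] by linarith
  then show ?thesis
    using mu_le[OF assms] weight_spmf_le_1[of "loop s"] by (simp add: lossless_spmf_def)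
qed

end

locale progress_loop_cost = progress_loop +
  fixes cost :: "'r \<Rightarrow> nat" and level :: "'s \<Rightarrow> nat" and c :: nat
  assumes cost_le: "\<And>s r. inv s \<Longrightarrow> Inl r \<in> set_spmf (body s) \<Longrightarrow> cost r \<le> level s + c"
    and level_step_le: "\<And>s s'. inv s \<Longrightarrow> Inr s' \<in> set_spmf (body s) \<Longrightarrow> level s' \<le> level s + c"
begin

lemma run_steps_cost_le:
  "inv s \<Longrightarrow> x \<in> set_spmf (run_steps body n s) \<Longrightarrow>
   (case x of Inl r \<Rightarrow> cost r \<le> level s + c * n | Inr s' \<Rightarrow> level s' \<le> level s + c * n)"
proof (induction n arbitrary: s x)
  case (Suc n)
  from Suc.prems(2) obtain y where y: "y \<in> set_spmf (body s)"
    and x: "x \<in> set_spmf (case y of Inl r \<Rightarrow> return_spmf (Inl r) | Inr s' \<Rightarrow> run_steps body n s')"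
    by (auto simp: set_bind_spmf)
  show ?case
  proof (cases y)
    case (Inl r)
    then show ?thesis using x y cost_le[OF Suc.prems(1), of r] by auto
  next
    case (Inr s')
    have "inv s'" "level s' \<le> level s + c"
      using y Inr inv_step[OF Suc.prems(1)] level_step_le[OF Suc.prems(1)] by simp_all
    with Suc.IH[of s' x] x Inr show ?thesis by (auto split: sum.splits)
  qed
qed simp

text \<open>Truncating the excess cost at K keeps its supremum over invariant states finite, so the
  recurrence below can be solved for it.\<close>
definition truncated_excess :: "nat \<Rightarrow> 's \<Rightarrow> ennreal" where
  "truncated_excess K s = (\<integral>\<^sup>+ r. of_nat (min (cost r - level s) K) \<partial>measure_spmf (loop s))"

lemma truncated_excess_le: "truncated_excess K s \<le> of_nat K"
proof -
  have "truncated_excess K s \<le> (\<integral>\<^sup>+ r. of_nat K \<partial>measure_spmf (loop s))"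
    unfolding truncated_excess_def by (intro nn_integral_mono) simp
  also have "\<dots> = of_nat K * ennreal (weight_spmf (loop s))"
    by (simp add: emeasure_space_measure_spmf)
  also have "\<dots> \<le> of_nat K"
    by (rule mult_weight_spmf_le)
  finally show ?thesis .
qed

lemma nn_integral_continue_truncated_le:
  assumes "inv s" and x: "x \<in> set_spmf (run_steps body n s)"
  shows "(\<integral>\<^sup>+ r. of_nat (min (cost r - level s) K) \<partial>measure_spmf (continue_loop loop x))
    \<le> of_nat (c * n) + (SUP t\<in>Collect inv. truncated_excess K t) * indicator {x. \<not> isl x} x"
proof (cases x)
  case (Inl r)
  then have "cost r \<le> level s + c * n" using run_steps_cost_le[OF assms] by simp
  then have "min (cost r - level s) K \<le> c * n" by linarith
  then have "(of_nat (min (cost r - level s) K) :: ennreal) \<le> of_nat (c * n)"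
    by (simp only: of_nat_le_iff)
  then show ?thesis
    using Inl by (simp add: continue_loop_def measure_spmf_return_spmf nn_integral_return)
next
  case (Inr s')
  have "inv s'" using run_steps_inv[OF assms(1), of s'] x Inr by blast
  have "level s' \<le> level s + c * n" using run_steps_cost_le[OF assms] Inr by simp
  then have "min (cost r - level s) K \<le> min (cost r - level s') K + c * n" for r
    by linarith
  then have "(of_nat (min (cost r - level s) K) :: ennreal)
      \<le> of_nat (min (cost r - level s') K) + of_nat (c * n)" for r
    by (simp only: of_nat_add[symmetric] of_nat_le_iff)
  then have "(\<integral>\<^sup>+ r. of_nat (min (cost r - level s) K) \<partial>measure_spmf (loop s'))
      \<le> (\<integral>\<^sup>+ r. of_nat (min (cost r - level s') K) + of_nat (c * n) \<partial>measure_spmf (loop s'))"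
    by (intro nn_integral_mono)
  also have "\<dots> = truncated_excess K s' + of_nat (c * n) * ennreal (weight_spmf (loop s'))"
    unfolding truncated_excess_def by (simp add: nn_integral_add emeasure_space_measure_spmf)
  also have "\<dots> \<le> (SUP t\<in>Collect inv. truncated_excess K t) + of_nat (c * n)"
    using \<open>inv s'\<close> by (intro add_mono SUP_upper mult_weight_spmf_le) simp
  finally show ?thesis using Inr by (simp add: continue_loop_def add.commute)
qed

lemma truncated_excess_recurrence:
  assumes "inv s"
  shows "truncated_excess K s
    \<le> of_nat (c * Suc bound) + (SUP t\<in>Collect inv. truncated_excess K t) * ennreal (1 - q ^ Suc bound)"
proof -
  let ?S = "run_steps body (Suc bound) s"
  let ?C = "c * Suc bound"
  let ?sup = "SUP t\<in>Collect inv. truncated_excess K t"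
  have "truncated_excess K s = (\<integral>\<^sup>+ x. \<integral>\<^sup>+ r. of_nat (min (cost r - level s) K)
      \<partial>measure_spmf (continue_loop loop x) \<partial>measure_spmf ?S)"
    unfolding truncated_excess_def by (rule nn_integral_loop_run_steps)
  also have "\<dots> \<le> (\<integral>\<^sup>+ x. of_nat ?C + ?sup * indicator {x. \<not> isl x} x \<partial>measure_spmf ?S)"
    by (intro nn_integral_mono_AE AE_measure_spmf_iff[THEN iffD2] ballI nn_integral_continue_truncated_le[OF assms])
  also have "\<dots> = of_nat ?C * ennreal (weight_spmf ?S) + ?sup * ennreal (1 - spmf (map_spmf isl ?S) True)"
    using lossless_run_steps[OF assms]
    by (simp add: nn_integral_add nn_integral_cmult_indicator emeasure_space_measure_spmf
        emeasure_not_isl_spmf del: run_steps.simps)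
  also have "\<dots> \<le> of_nat ?C + ?sup * ennreal (1 - q ^ Suc bound)"
    using run_steps_bound_stop_ge[OF assms]
    by (intro add_mono mult_weight_spmf_le mult_left_mono ennreal_leI) simp_all
  finally show ?thesis .
qed

lemma truncated_excess_le_ratio:
  assumes "inv s"
  shows "truncated_excess K s \<le> ennreal (c * Suc bound / q ^ Suc bound)"
proof -
  define p where "p = q ^ Suc bound"
  define S where "S = (SUP t\<in>Collect inv. truncated_excess K t)"
  have "0 < p" "p \<le> 1"
    using q_pos q_le_1[OF assms] by (simp_all add: p_def power_le_one mult_le_one)
  have "(SUP t\<in>Collect inv. truncated_excess K t) \<le> of_nat (c * Suc bound) + S * ennreal (1 - p)"
    using truncated_excess_recurrence by (auto intro: SUP_least simp: S_def p_def)
  then have S_rec: "S \<le> of_nat (c * Suc bound) + S * ennreal (1 - p)"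
    unfolding S_def[symmetric] .
  have "S \<le> of_nat K"
    unfolding S_def by (rule SUP_least) (rule truncated_excess_le)
  then obtain \<sigma> where \<sigma>: "S = ennreal \<sigma>" "0 \<le> \<sigma>"
    by (cases S) (auto simp: top_unique)
  have "\<sigma> \<le> c * Suc bound + \<sigma> * (1 - p)"
    using S_rec \<sigma> \<open>p \<le> 1\<close>
    by (simp add: ennreal_of_nat_eq_real_of_nat ennreal_mult[symmetric] ennreal_plus[symmetric]
        ennreal_le_iff del: ennreal_plus)
  then have "\<sigma> \<le> c * Suc bound / p"
    using \<open>0 < p\<close> by (simp add: pos_le_divide_eq algebra_simps)
  moreover have "truncated_excess K s \<le> S"
    unfolding S_def using assms by (auto intro: SUP_upper)
  ultimately show ?thesis
    using \<sigma> by (simp add: p_def order_trans)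
qed

theorem nn_integral_cost_loop_le:
  assumes "inv s"
  shows "(\<integral>\<^sup>+ r. of_nat (cost r) \<partial>measure_spmf (loop s))
    \<le> of_nat (level s) + ennreal (c * Suc bound / q ^ Suc bound)"
proof -
  have excess: "(\<integral>\<^sup>+ r. of_nat (cost r - level s) \<partial>measure_spmf (loop s)) = (SUP K. truncated_excess K s)"
    unfolding truncated_excess_def
    by (subst ennreal_of_nat_eq_SUP_min)
       (auto intro!: nn_integral_monotone_convergence_SUP simp: incseq_def le_fun_def)
  have "of_nat (cost r) \<le> (of_nat (level s) + of_nat (cost r - level s) :: ennreal)" for r
    unfolding of_nat_add[symmetric] by (rule of_nat_mono) linarith
  then have "(\<integral>\<^sup>+ r. of_nat (cost r) \<partial>measure_spmf (loop s))
      \<le> (\<integral>\<^sup>+ r. of_nat (level s) + of_nat (cost r - level s) \<partial>measure_spmf (loop s))"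
    by (intro nn_integral_mono)
  also have "\<dots> = of_nat (level s) * ennreal (weight_spmf (loop s)) + (SUP K. truncated_excess K s)"
    by (simp add: nn_integral_add emeasure_space_measure_spmf excess)
  also have "\<dots> \<le> of_nat (level s) + ennreal (c * Suc bound / q ^ Suc bound)"
    using truncated_excess_le_ratio[OF assms]
    by (intro add_mono mult_weight_spmf_le SUP_least)
  finally show ?thesis .
qed

end


section \<open>Rewiring an edge\<close>

definition rewire :: "bool \<Rightarrow> 'a graph \<Rightarrow> 'a \<Rightarrow> 'a \<Rightarrow> 'a \<Rightarrow> 'a graph" where
  "rewire directed C u v w = add_edge directed (del_edge directed C (u, v)) (u, w)"

lemma possible_edges_sym: "(u, v) \<in> possible_edges V \<Longrightarrow> (v, u) \<in> possible_edges V"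
  by (auto simp: possible_edges_def)

lemma finite_possible_edges: "finite V \<Longrightarrow> finite (possible_edges V)"
  by (rule finite_subset[of _ "V \<times> V"]) (auto simp: possible_edges_def)

lemma finite_graph: "finite V \<Longrightarrow> is_graph directed V C \<Longrightarrow> finite C"
  using finite_possible_edges finite_subset by (auto simp: is_graph_def)

lemma finite_out_neighbours: "finite C \<Longrightarrow> finite {w. (v, w) \<in> C}"
  by (rule finite_subset[of _ "snd ` C"]) force+

lemma finite_in_neighbours: "finite C \<Longrightarrow> finite {u. (u, v) \<in> C}"
  by (rule finite_subset[of _ "fst ` C"]) force+

lemma indeg_eq_card_Int: "indeg C v = card (C \<inter> {e. snd e = v})"
proof -
  have "C \<inter> {e. snd e = v} = (\<lambda>u. (u, v)) ` {u. (u, v) \<in> C}" by auto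
  then show ?thesis by (simp add: indeg_def card_image inj_on_def)
qed

lemma outdeg_eq_card_Int: "outdeg C v = card (C \<inter> {e. fst e = v})"
proof -
  have "C \<inter> {e. fst e = v} = Pair v ` {w. (v, w) \<in> C}" by auto
  then show ?thesis by (simp add: outdeg_def card_image inj_on_def)
qed

lemma card_insert_Diff_Int:
  assumes "finite A" "d \<in> A" "e \<notin> A"
  shows "int (card (insert e (A - {d}) \<inter> X)) = int (card (A \<inter> X)) + of_bool (e \<in> X) - of_bool (d \<in> X)"
proof -
  have "(A - {d}) \<inter> X = A \<inter> X - {d}" by blast
  moreover have "card (A \<inter> X) > 0" if "d \<in> X"
    using assms that by (auto simp: card_gt_0_iff)
  ultimately have "int (card ((A - {d}) \<inter> X)) = int (card (A \<inter> X)) - of_bool (d \<in> X)"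
    using assms by (cases "d \<in> X") (simp_all add: card_Diff_singleton of_nat_diff)
  moreover have "e \<notin> (A - {d}) \<inter> X" using assms(3) by blast
  ultimately show ?thesis
    using assms(1) by (cases "e \<in> X") (simp_all add: Int_insert_left)
qed

lemma rewire_directed: "directed \<Longrightarrow> rewire directed C u v w = insert (u, w) (C - {(u, v)})"
  by (simp add: rewire_def add_edge_def del_edge_def)

lemma rewire_undirected:
  "\<not> directed \<Longrightarrow> u \<noteq> v \<Longrightarrow> w \<noteq> v \<Longrightarrow>
   rewire directed C u v w = insert (w, u) (insert (u, w) (C - {(u, v)}) - {(v, u)})"
  by (auto simp: rewire_def add_edge_def del_edge_def)

lemma indeg_rewire:
  assumes C: "is_graph directed V C" "finite C" and "(u, v) \<in> C" "(u, w) \<notin> C" "u \<noteq> w"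
  shows "int (indeg (rewire directed C u v w) x) = int (indeg C x) + of_bool (w = x) - of_bool (v = x)"
proof (cases directed)
  case True
  then show ?thesis
    using assms by (simp add: rewire_directed indeg_eq_card_Int card_insert_Diff_Int)
next
  case False
  let ?D = "insert (u, w) (C - {(u, v)})"
  have "u \<noteq> v" using assms(1,3) by (auto simp: is_graph_def possible_edges_def)
  have "w \<noteq> v" using assms(3,4) by auto
  have "(v, u) \<in> C" "(w, u) \<notin> C"
    using assms(1,3,4) False by (auto simp: is_graph_def sym_def)
  then have "(v, u) \<in> ?D" "(w, u) \<notin> ?D" using \<open>u \<noteq> v\<close> \<open>u \<noteq> w\<close> by auto
  from card_insert_Diff_Int[OF _ this, of "{e. snd e = x}"]
  have "int (indeg (insert (w, u) (?D - {(v, u)})) x) = int (indeg ?D x)"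
    using C by (simp add: indeg_eq_card_Int)
  also have "\<dots> = int (indeg C x) + of_bool (w = x) - of_bool (v = x)"
    using assms by (simp add: indeg_eq_card_Int card_insert_Diff_Int)
  finally show ?thesis
    using False \<open>u \<noteq> v\<close> \<open>w \<noteq> v\<close> by (simp add: rewire_undirected)
qed

lemma outdeg_rewire:
  assumes "directed" "finite C" "(u, v) \<in> C" "(u, w) \<notin> C"
  shows "outdeg (rewire directed C u v w) x = outdeg C x"
proof -
  have "int (outdeg (rewire directed C u v w) x) = int (outdeg C x)"
    using assms by (simp add: rewire_directed outdeg_eq_card_Int card_insert_Diff_Int)
  then show ?thesis by simp
qed

lemma is_graph_rewire:
  assumes "is_graph directed V C" "(u, w) \<in> possible_edges V"
  shows "is_graph directed V (rewire directed C u v w)"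
proof (cases directed)
  case True
  then show ?thesis
    using assms by (auto simp: is_graph_def rewire_directed)
next
  case False
  have "rewire directed C u v w \<subseteq> possible_edges V"
    using assms possible_edges_sym[OF assms(2)] False
    by (auto simp: is_graph_def rewire_def add_edge_def del_edge_def)
  moreover have "sym (rewire directed C u v w)"
    using assms(1) False unfolding is_graph_def sym_def
    by (auto simp: rewire_def add_edge_def del_edge_def)
  ultimately show ?thesis
    using False by (simp add: is_graph_def)
qed

lemma card_rewire_Diff_less:
  assumes "is_graph directed V H" "finite C" "(u, v) \<in> C - H" "(u, w) \<in> H"
  shows "card (rewire directed C u v w - H) < card (C - H)"
proof -
  have "(w, u) \<in> H" if "\<not> directed"
    using assms(1,4) that by (auto simp: is_graph_def sym_def)
  then have "rewire directed C u v w - H \<subseteq> (C - H) - {(u, v)}"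
    using assms(4) by (auto simp: rewire_def add_edge_def del_edge_def)
  then have "card (rewire directed C u v w - H) \<le> card ((C - H) - {(u, v)})"
    using assms(2) by (intro card_mono) auto
  also have "\<dots> < card (C - H)"
    using assms(2,3) by (intro card_Diff1_less) auto
  finally show ?thesis .
qed


section \<open>The sampler\<close>

text \<open>A state (C, prev, cur, acc) between two iterations consists of the current graph, W_{n-1}
  (None for the dummy symbol), W_n, and the walk W_n ... W_0 so far, reversed.\<close>
type_synonym 'a walk_state = "'a graph \<times> 'a option \<times> 'a \<times> 'a list"

locale sampler_setting =
  fixes directed :: bool and V :: "'a set" and G0 G :: "'a graph" and F :: "('a \<times> 'a) set"
  assumes finite_V: "finite V"
    and G_in_class: "G \<in> graph_class directed V G0 F"
begin

abbreviation known :: "('a \<times> 'a) set" where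
  "known \<equiv> known_edges directed V G0 F"

abbreviation graphs :: "'a graph set" where
  "graphs \<equiv> graph_class directed V G0 F"

lemma in_graphs_is_graph: "H \<in> graphs \<Longrightarrow> is_graph directed V H"
  by (simp add: graph_class_def)

lemma in_graphs_indeg: "H \<in> graphs \<Longrightarrow> v \<in> V \<Longrightarrow> indeg H v = indeg G v"
  using G_in_class by (simp add: graph_class_def)

lemma in_graphs_outdeg: "H \<in> graphs \<Longrightarrow> v \<in> V \<Longrightarrow> outdeg H v = outdeg G v"
  using G_in_class by (simp add: graph_class_def)

lemma known_edge_iff: "e \<in> known \<Longrightarrow> H \<in> graphs \<Longrightarrow> e \<in> H \<longleftrightarrow> e \<in> G"
  using G_in_class by (auto simp: known_edges_def)

lemma unknown_edge_in: "e \<in> possible_edges V \<Longrightarrow> e \<notin> known \<Longrightarrow> \<exists>H\<in>graphs. e \<in> H"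
  by (auto simp: known_edges_def)

lemma unknown_edge_notin: "e \<in> possible_edges V \<Longrightarrow> e \<notin> known \<Longrightarrow> \<exists>H\<in>graphs. e \<notin> H"
  by (auto simp: known_edges_def)

lemma known_edges_sym:
  assumes "\<not> directed" "(u, v) \<in> known"
  shows "(v, u) \<in> known"
proof -
  have "(u, v) \<in> H \<longleftrightarrow> (v, u) \<in> H" if "H \<in> graphs" for H
    using in_graphs_is_graph[OF that] assms(1) by (auto simp: is_graph_def sym_def)
  then show ?thesis
    using assms(2) possible_edges_sym[of u v V] by (simp add: known_edges_def)
qed

lemma rewire_Int_known:
  assumes "(u, v) \<notin> known" "(u, w) \<notin> known"
  shows "rewire directed C u v w \<inter> known = C \<inter> known"
  using assms known_edges_sym by (auto simp: rewire_def add_edge_def del_edge_def)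

lemma differing_edge_not_known:
  "C \<inter> known = G \<inter> known \<Longrightarrow> H \<in> graphs \<Longrightarrow> e \<in> C \<longleftrightarrow> e \<notin> H \<Longrightarrow> e \<notin> known"
  using known_edge_iff by blast

text \<open>Every iteration moves one in-edge of cur, so C has the degrees of G except that cur has one
  in-edge too many and w0 one too few.\<close>
definition walk_inv :: "'a \<Rightarrow> 'a walk_state \<Rightarrow> bool" where
  "walk_inv w0 s = (case s of (C, prev, cur, acc) \<Rightarrow>
     is_graph directed V C \<and> C \<inter> known = G \<inter> known \<and> cur \<in> V \<and> w0 \<in> V \<and>
     (\<forall>v\<in>V. int (indeg C v) = int (indeg G v) + of_bool (cur = v) - of_bool (w0 = v)) \<and>
     (directed \<longrightarrow> (\<forall>v\<in>V. outdeg C v = outdeg G v)) \<and>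
     (case prev of
        None \<Rightarrow> cur = w0 \<and> Nset directed V G0 F C cur \<noteq> {}
      | Some p \<Rightarrow> cur \<noteq> w0 \<and> (p, cur) \<in> C \<and> (p, cur) \<notin> known))"

lemma walk_inv_finite: "walk_inv w0 (C, prev, cur, acc) \<Longrightarrow> finite C"
  using finite_V finite_graph by (auto simp: walk_inv_def)

lemma walk_inv_subset: "walk_inv w0 (C, prev, cur, acc) \<Longrightarrow> C \<subseteq> possible_edges V"
  by (simp add: walk_inv_def is_graph_def)

text \<open>An in-edge (w1, cur) of C missing from some H in the class can be replaced by an out-edge
  of w1 lying in H: w1 has no more out-neighbours in C than in H (its degree is that of G), and
  cur is one of them not in H.\<close>
lemma Mset_witness:
  assumes inv: "walk_inv w0 (C, prev, cur, acc)" and H: "H \<in> graphs"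
    and e: "(w1, cur) \<in> C" "(w1, cur) \<notin> H"
  shows "\<exists>x. (w1, x) \<in> H \<and> x \<in> Mset directed V G0 F C w1"
proof -
  have gC: "is_graph directed V C" and agree: "C \<inter> known = G \<inter> known"
    and deg: "\<forall>v\<in>V. int (indeg C v) = int (indeg G v) + of_bool (cur = v) - of_bool (w0 = v)"
    and odeg: "directed \<longrightarrow> (\<forall>v\<in>V. outdeg C v = outdeg G v)"
    using inv by (auto simp: walk_inv_def)
  have gH: "is_graph directed V H" using in_graphs_is_graph[OF H] .
  have "w1 \<in> V" "w1 \<noteq> cur"
    using e gC by (auto simp: is_graph_def possible_edges_def)
  define A where "A = {x. (w1, x) \<in> C}"
  define B where "B = {x. (w1, x) \<in> H}"
  have "finite A"
    unfolding A_def using finite_graph[OF finite_V gC] by (rule finite_out_neighbours)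
  have "card A \<le> card B"
  proof (cases directed)
    case True
    then show ?thesis
      using odeg \<open>w1 \<in> V\<close> in_graphs_outdeg[OF H] by (simp add: A_def B_def outdeg_def)
  next
    case False
    have "A = {u. (u, w1) \<in> C}" "B = {u. (u, w1) \<in> H}"
      using gC gH False by (auto simp: A_def B_def is_graph_def sym_def)
    then have "int (card A) = int (indeg C w1)" "card B = indeg G w1"
      using in_graphs_indeg[OF H \<open>w1 \<in> V\<close>] by (simp_all add: indeg_def)
    moreover have "int (indeg C w1) \<le> int (indeg G w1)"
      using deg \<open>w1 \<in> V\<close> \<open>w1 \<noteq> cur\<close> by auto
    ultimately show ?thesis by simp
  qed
  moreover have "cur \<in> A" "cur \<notin> B" using e by (simp_all add: A_def B_def)
  ultimately have "\<not> B \<subseteq> A"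
    using card_seteq[OF \<open>finite A\<close>, of B] by blast
  then obtain x where x: "(w1, x) \<in> H" "(w1, x) \<notin> C"
    by (auto simp: A_def B_def)
  have "(w1, x) \<in> possible_edges V" using x gH by (auto simp: is_graph_def)
  moreover have "(w1, x) \<notin> known"
    using differing_edge_not_known[OF agree H] x by simp
  ultimately show ?thesis
    using x by (auto simp: Mset_def possible_edges_def)
qed

text \<open>Dually, cur has one in-neighbour more in C than in any H of the class, so if the last
  edge (p, cur) lies in H then some other in-edge of cur is missing from H.\<close>
lemma Nset_witness:
  assumes inv: "walk_inv w0 (C, Some p, cur, acc)" and H: "H \<in> graphs" and "(p, cur) \<in> H"
  shows "\<exists>u. (u, cur) \<in> C - H \<and> u \<in> Nset directed V G0 F C cur - {p}"
proof -
  have gC: "is_graph directed V C" and agree: "C \<inter> known = G \<inter> known" and "cur \<in> V"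
    and "cur \<noteq> w0"
    and deg: "\<forall>v\<in>V. int (indeg C v) = int (indeg G v) + of_bool (cur = v) - of_bool (w0 = v)"
    using inv by (auto simp: walk_inv_def)
  define A where "A = {u. (u, cur) \<in> C}"
  define B where "B = {u. (u, cur) \<in> H}"
  have "finite B"
    unfolding B_def using finite_graph[OF finite_V in_graphs_is_graph[OF H]] by (rule finite_in_neighbours)
  have "int (card A) = int (indeg G cur) + 1"
    using deg \<open>cur \<in> V\<close> \<open>cur \<noteq> w0\<close> by (auto simp: A_def indeg_def)
  moreover have "card B = indeg G cur"
    using in_graphs_indeg[OF H \<open>cur \<in> V\<close>] by (simp add: B_def indeg_def)
  ultimately have "card B < card A" by simp
  then obtain u where u: "u \<in> A" "u \<notin> B"
    using card_mono[OF \<open>finite B\<close>, of A] by (meson leD subsetI)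
  then have u: "(u, cur) \<in> C" "(u, cur) \<notin> H" by (simp_all add: A_def B_def)
  have "(u, cur) \<in> possible_edges V" using u gC by (auto simp: is_graph_def)
  moreover have "(u, cur) \<notin> known"
    using differing_edge_not_known[OF agree H] u by simp
  ultimately show ?thesis
    using u \<open>(p, cur) \<in> H\<close> by (auto simp: Nset_def possible_edges_def)
qed

lemma Nset_nonempty:
  assumes "walk_inv w0 (C, prev, cur, acc)"
  shows "Nset directed V G0 F C cur - set_option prev \<noteq> {}"
proof (cases prev)
  case None
  then show ?thesis using assms by (auto simp: walk_inv_def)
next
  case (Some p)
  then have "(p, cur) \<in> C" "(p, cur) \<notin> known" using assms by (simp_all add: walk_inv_def)
  then obtain H where "H \<in> graphs" "(p, cur) \<in> H"
    using unknown_edge_in walk_inv_subset[OF assms] by blast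
  then show ?thesis
    using Nset_witness assms Some by fastforce
qed

lemma Mset_nonempty:
  assumes inv: "walk_inv w0 (C, prev, cur, acc)" and "w1 \<in> Nset directed V G0 F C cur"
  shows "Mset directed V G0 F C w1 \<noteq> {}"
proof -
  have "(w1, cur) \<in> C" "(w1, cur) \<notin> known" using assms(2) by (simp_all add: Nset_def)
  then obtain H where "H \<in> graphs" "(w1, cur) \<notin> H"
    using unknown_edge_notin walk_inv_subset[OF inv] by blast
  then show ?thesis
    using Mset_witness[OF inv] \<open>(w1, cur) \<in> C\<close> by blast
qed

lemma walk_inv_rewire:
  assumes inv: "walk_inv w0 (C, prev, cur, acc)"
    and w1: "w1 \<in> Nset directed V G0 F C cur" and w2: "w2 \<in> Mset directed V G0 F C w1"
    and "w2 \<noteq> w0"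
  shows "walk_inv w0 (rewire directed C w1 cur w2, Some w1, w2, acc')"
proof -
  have gC: "is_graph directed V C" and "finite C" and agree: "C \<inter> known = G \<inter> known"
    and "w0 \<in> V"
    and deg: "\<forall>v\<in>V. int (indeg C v) = int (indeg G v) + of_bool (cur = v) - of_bool (w0 = v)"
    and odeg: "directed \<longrightarrow> (\<forall>v\<in>V. outdeg C v = outdeg G v)"
    using inv walk_inv_finite by (auto simp: walk_inv_def)
  have e1: "(w1, cur) \<in> C" "(w1, cur) \<notin> known" using w1 by (simp_all add: Nset_def)
  have e2: "w2 \<in> V" "(w1, w2) \<in> possible_edges V" "(w1, w2) \<notin> C" "(w1, w2) \<notin> known"
    using w2 by (simp_all add: Mset_def)
  have "w1 \<noteq> w2" using e2(2) by (simp add: possible_edges_def)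
  have "int (indeg (rewire directed C w1 cur w2) v)
      = int (indeg G v) + of_bool (w2 = v) - of_bool (w0 = v)" if "v \<in> V" for v
    using indeg_rewire[OF gC \<open>finite C\<close> e1(1) e2(3) \<open>w1 \<noteq> w2\<close>, of v] deg that by simp
  moreover have "outdeg (rewire directed C w1 cur w2) v = outdeg G v" if directed "v \<in> V" for v
    using outdeg_rewire[OF that(1) \<open>finite C\<close> e1(1) e2(3)] odeg that by simp
  moreover have "(w1, w2) \<in> rewire directed C w1 cur w2"
    by (simp add: rewire_def add_edge_def)
  ultimately show ?thesis
    using is_graph_rewire[OF gC e2(2)] rewire_Int_known[OF e1(2) e2(4)] agree e2 \<open>w0 \<in> V\<close> \<open>w2 \<noteq> w0\<close>
    by (simp add: walk_inv_def)
qed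

lemma finite_Nset: "finite (Nset directed V G0 F C v - X)"
  using finite_V by (auto simp: Nset_def)

lemma finite_Mset: "finite (Mset directed V G0 F C v)"
  using finite_V by (auto simp: Mset_def)

definition walk_step_result :: "'a \<Rightarrow> 'a walk_state \<Rightarrow> 'a \<Rightarrow> 'a \<Rightarrow> 'a list + 'a walk_state" where
  "walk_step_result w0 s w1 w2 = (case s of (C, prev, cur, acc) \<Rightarrow>
     if w2 = w0 then Inl (rev (w2 # w1 # acc))
     else Inr (rewire directed C w1 cur w2, Some w1, w2, w2 # w1 # acc))"

definition walk_step :: "'a \<Rightarrow> 'a walk_state \<Rightarrow> ('a list + 'a walk_state) spmf" where
  "walk_step w0 s = (case s of (C, prev, cur, acc) \<Rightarrow>
     spmf_of_set (Nset directed V G0 F C cur - set_option prev) \<bind> (\<lambda>w1.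
     spmf_of_set (Mset directed V G0 F C w1) \<bind> (\<lambda>w2.
     return_spmf (walk_step_result w0 s w1 w2))))"

definition walk_loop :: "'a \<Rightarrow> 'a walk_state \<Rightarrow> 'a list spmf" where
  "walk_loop w0 s = (case s of (C, prev, cur, acc) \<Rightarrow> sampler_loop directed V G0 F w0 C prev cur acc)"

lemma walk_loop_unfold: "walk_loop w0 s = walk_step w0 s \<bind> continue_loop (walk_loop w0)"
proof -
  obtain C prev cur acc where s: "s = (C, prev, cur, acc)" by (cases s)
  show ?thesis
    unfolding s walk_loop_def prod.case
    by (subst sampler_loop.simps)
       (auto simp: walk_step_def walk_step_result_def continue_loop_def walk_loop_def rewire_def Let_def
         intro!: bind_spmf_cong)
qed

lemma set_walk_step:
  assumes "x \<in> set_spmf (walk_step w0 (C, prev, cur, acc))"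
  obtains w1 w2 where "w1 \<in> Nset directed V G0 F C cur - set_option prev"
    "w2 \<in> Mset directed V G0 F C w1" "x = walk_step_result w0 (C, prev, cur, acc) w1 w2"
  using assms finite_Nset finite_Mset by (auto simp: walk_step_def set_bind_spmf)

lemma lossless_walk_step: "walk_inv w0 s \<Longrightarrow> lossless_spmf (walk_step w0 s)"
  using Nset_nonempty Mset_nonempty finite_Nset finite_Mset
  by (cases s) (auto simp: walk_step_def)

lemma spmf_walk_step_ge:
  assumes w1: "w1 \<in> Nset directed V G0 F C cur - set_option prev"
    and w2: "w2 \<in> Mset directed V G0 F C w1"
  shows "1 / real (card V) ^ 2
    \<le> spmf (walk_step w0 (C, prev, cur, acc)) (walk_step_result w0 (C, prev, cur, acc) w1 w2)"
proof -
  let ?A = "Nset directed V G0 F C cur - set_option prev"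
  let ?B = "Mset directed V G0 F C w1"
  let ?r = "walk_step_result w0 (C, prev, cur, acc)"
  have "card ?A \<le> card V" "card ?B \<le> card V"
    using finite_V by (auto intro!: card_mono simp: Nset_def Mset_def)
  moreover have "0 < card ?A" "0 < card ?B"
    using w1 w2 finite_Nset finite_Mset by (auto simp: card_gt_0_iff)
  ultimately have "1 / real (card V) ^ 2 \<le> spmf (spmf_of_set ?A) w1 * spmf (spmf_of_set ?B) w2"
    using w1 w2 by (simp add: spmf_of_set power2_eq_square frac_le mult_mono)
  also have "\<dots> \<le> spmf (spmf_of_set ?A) w1 * spmf (spmf_of_set ?B \<bind> (\<lambda>w2. return_spmf (?r w1 w2))) (?r w1 w2)"
    using spmf_bind_ge[of "spmf_of_set ?B" w2 "\<lambda>w2. return_spmf (?r w1 w2)" "?r w1 w2"]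
    by (intro mult_left_mono) simp_all
  also have "\<dots> \<le> spmf (walk_step w0 (C, prev, cur, acc)) (?r w1 w2)"
    unfolding walk_step_def prod.case by (rule spmf_bind_ge)
  finally show ?thesis .
qed

text \<open>The potential of a state after the first step is the number of edges of C outside the
  nearest graph of the class containing the edge just added. The step built from
  Nset_witness and Mset_witness for that graph H trades an edge of C - H for an edge of H,
  and H still contains the new last edge.\<close>
definition walk_potential :: "'a walk_state \<Rightarrow> nat" where
  "walk_potential s = (case s of (C, prev, cur, acc) \<Rightarrow> (case prev of
      None \<Rightarrow> Suc (card (possible_edges V))
    | Some p \<Rightarrow> (LEAST k. \<exists>H\<in>graphs. (p, cur) \<in> H \<and> k = card (C - H))))"

lemma walk_potential_le:
  "H \<in> graphs \<Longrightarrow> (p, cur) \<in> H \<Longrightarrow> walk_potential (C, Some p, cur, acc) \<le> card (C - H)"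
  unfolding walk_potential_def by (auto intro: Least_le)

lemma walk_potential_attained:
  assumes "walk_inv w0 (C, Some p, cur, acc)"
  obtains H where "H \<in> graphs" "(p, cur) \<in> H" "walk_potential (C, Some p, cur, acc) = card (C - H)"
proof -
  have "(p, cur) \<in> C" "(p, cur) \<notin> known" using assms by (simp_all add: walk_inv_def)
  then have "\<exists>k. \<exists>H\<in>graphs. (p, cur) \<in> H \<and> k = card (C - H)"
    using unknown_edge_in walk_inv_subset[OF assms] by blast
  from LeastI_ex[OF this] show ?thesis
    using that unfolding walk_potential_def by auto
qed

lemma walk_potential_Some_le:
  assumes "walk_inv w0 (C, Some p, cur, acc)"
  shows "walk_potential (C, Some p, cur, acc) \<le> card (possible_edges V)"
proof -
  obtain H where "walk_potential (C, Some p, cur, acc) = card (C - H)"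
    using walk_potential_attained[OF assms] .
  moreover have "card (C - H) \<le> card (possible_edges V)"
    using walk_inv_subset[OF assms] finite_possible_edges[OF finite_V] by (auto intro: card_mono)
  ultimately show ?thesis by simp
qed

lemma walk_potential_le_Suc:
  assumes "walk_inv w0 s"
  shows "walk_potential s \<le> Suc (card (possible_edges V))"
proof -
  obtain C prev cur acc where s: "s = (C, prev, cur, acc)" by (cases s)
  show ?thesis
    using walk_potential_Some_le[of w0 C _ cur acc] assms s
    by (cases prev) (auto simp: walk_potential_def intro: le_SucI)
qed

lemma exists_walk_step_decreasing:
  assumes inv: "walk_inv w0 (C, prev, cur, acc)"
  shows "\<exists>w1 w2. w1 \<in> Nset directed V G0 F C cur - set_option prev \<and> w2 \<in> Mset directed V G0 F C w1 \<and>
    (w2 \<noteq> w0 \<longrightarrow> walk_potential (rewire directed C w1 cur w2, Some w1, w2, w2 # w1 # acc)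
                    < walk_potential (C, prev, cur, acc))"
proof (cases prev)
  case None
  obtain w1 where w1: "w1 \<in> Nset directed V G0 F C cur - set_option prev"
    using Nset_nonempty[OF inv] by blast
  then obtain w2 where w2: "w2 \<in> Mset directed V G0 F C w1"
    using Mset_nonempty[OF inv] by blast
  have "walk_potential (rewire directed C w1 cur w2, Some w1, w2, w2 # w1 # acc)
      < walk_potential (C, prev, cur, acc)" if "w2 \<noteq> w0"
  proof -
    have "walk_inv w0 (rewire directed C w1 cur w2, Some w1, w2, w2 # w1 # acc)"
      using walk_inv_rewire[OF inv _ w2 that] w1 by simp
    then show ?thesis
      using walk_potential_Some_le None by (fastforce simp: walk_potential_def)
  qed
  then show ?thesis using w1 w2 by blast
next
  case (Some p)
  have inv': "walk_inv w0 (C, Some p, cur, acc)" using inv Some by simp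
  obtain H where H: "H \<in> graphs" "(p, cur) \<in> H" "walk_potential (C, Some p, cur, acc) = card (C - H)"
    using walk_potential_attained[OF inv'] by metis
  obtain u where u: "(u, cur) \<in> C - H" "u \<in> Nset directed V G0 F C cur - set_option prev"
    using Nset_witness[OF inv' H(1,2)] Some by auto
  obtain x where x: "(u, x) \<in> H" "x \<in> Mset directed V G0 F C u"
    using Mset_witness[OF inv H(1)] u(1) by blast
  have "walk_potential (rewire directed C u cur x, Some u, x, x # u # acc)
      \<le> card (rewire directed C u cur x - H)"
    by (rule walk_potential_le[OF H(1) x(1)])
  also have "\<dots> < walk_potential (C, prev, cur, acc)"
    using card_rewire_Diff_less[OF in_graphs_is_graph[OF H(1)] walk_inv_finite[OF inv] u(1) x(1)] H(3) Some
    by simp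
  finally show ?thesis using u x by blast
qed

lemma walk_step_progress:
  assumes inv: "walk_inv w0 s"
  shows "\<exists>x. 1 / real (card V) ^ 2 \<le> spmf (walk_step w0 s) x \<and>
    (case x of Inl _ \<Rightarrow> True | Inr s' \<Rightarrow> walk_potential s' < walk_potential s)"
proof -
  obtain C prev cur acc where s: "s = (C, prev, cur, acc)" by (cases s)
  obtain w1 w2 where w: "w1 \<in> Nset directed V G0 F C cur - set_option prev"
    "w2 \<in> Mset directed V G0 F C w1"
    "w2 \<noteq> w0 \<longrightarrow> walk_potential (rewire directed C w1 cur w2, Some w1, w2, w2 # w1 # acc) < walk_potential s"
    using exists_walk_step_decreasing inv s by blast
  show ?thesis
  proof (intro exI conjI)
    show "1 / real (card V) ^ 2 \<le> spmf (walk_step w0 s) (walk_step_result w0 s w1 w2)"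
      using spmf_walk_step_ge[OF w(1,2)] s by simp
    show "case walk_step_result w0 s w1 w2 of Inl _ \<Rightarrow> True | Inr s' \<Rightarrow> walk_potential s' < walk_potential s"
      using w(3) s by (simp add: walk_step_result_def)
  qed
qed

lemma walk_progress_loop_cost:
  assumes "w0 \<in> V"
  shows "progress_loop_cost (walk_step w0) (walk_loop w0) (walk_inv w0) walk_potential
    (Suc (card (possible_edges V))) (1 / real (card V) ^ 2) length (\<lambda>(C, prev, cur, acc). length acc) 2"
proof
  fix s s' assume inv: "walk_inv w0 s" and "Inr s' \<in> set_spmf (walk_step w0 s)"
  then obtain C prev cur acc w1 w2 where s: "s = (C, prev, cur, acc)"
    and w: "w1 \<in> Nset directed V G0 F C cur - set_option prev" "w2 \<in> Mset directed V G0 F C w1"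
    and "Inr s' = walk_step_result w0 s w1 w2"
    by (metis prod_cases4 set_walk_step)
  then have "w2 \<noteq> w0" "s' = (rewire directed C w1 cur w2, Some w1, w2, w2 # w1 # acc)"
    by (simp_all add: walk_step_result_def split: if_splits)
  then show "walk_inv w0 s'" "(case s' of (C, prev, cur, acc) \<Rightarrow> length acc) \<le> (case s of (C, prev, cur, acc) \<Rightarrow> length acc) + 2"
    using walk_inv_rewire inv w s by auto
next
  fix s r assume "Inl r \<in> set_spmf (walk_step w0 s)"
  then show "length r \<le> (case s of (C, prev, cur, acc) \<Rightarrow> length acc) + 2"
    by (cases s) (auto elim!: set_walk_step simp: walk_step_result_def split: if_splits)
next
  show "0 < 1 / real (card V) ^ 2"
    using assms finite_V by (auto simp: card_gt_0_iff)
qed (simp_all add: walk_loop_unfold lossless_walk_step walk_step_progress walk_potential_le_Suc)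

lemma sampler_loop_lossless_length_le:
  assumes "w0 \<in> V" "Nset directed V G0 F G w0 \<noteq> {}"
  defines "b \<equiv> Suc (card (possible_edges V))"
  shows "lossless_spmf (sampler_loop directed V G0 F w0 G None w0 [w0]) \<and>
    (\<integral>\<^sup>+ W. ennreal (real (length W - 1)) \<partial>measure_spmf (sampler_loop directed V G0 F w0 G None w0 [w0]))
      \<le> ennreal (1 + 2 * Suc b / (1 / real (card V) ^ 2) ^ Suc b)"
proof -
  interpret progress_loop_cost "walk_step w0" "walk_loop w0" "walk_inv w0" walk_potential b
    "1 / real (card V) ^ 2" length "\<lambda>(C, prev, cur, acc). length acc" 2
    unfolding b_def using assms(1) by (rule walk_progress_loop_cost)
  have inv: "walk_inv w0 (G, None, w0, [w0])"
    using G_in_class assms(1,2) by (simp add: walk_inv_def graph_class_def)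
  have loop: "sampler_loop directed V G0 F w0 G None w0 [w0] = walk_loop w0 (G, None, w0, [w0])"
    by (simp add: walk_loop_def)
  have "(\<integral>\<^sup>+ W. ennreal (real (length W - 1)) \<partial>measure_spmf (walk_loop w0 (G, None, w0, [w0])))
      \<le> (\<integral>\<^sup>+ W. of_nat (length W) \<partial>measure_spmf (walk_loop w0 (G, None, w0, [w0])))"
    by (intro nn_integral_mono) (simp add: ennreal_of_nat_eq_real_of_nat)
  also have "\<dots> \<le> ennreal (1 + 2 * Suc b / (1 / real (card V) ^ 2) ^ Suc b)"
    using nn_integral_cost_loop_le[OF inv] by (simp add: ennreal_plus)
  finally show ?thesis
    unfolding loop using lossless_loop[OF inv] by simp
qed

end

theorem proposition1:
  fixes directed :: bool and V :: "'a set" and G0 G :: "'a graph" and F :: "('a \<times> 'a) set"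
  assumes "finite V"
    and "is_graph directed V G0"
    and "F \<subseteq> possible_edges V"
    and "\<not> directed \<Longrightarrow> sym F"
    and "G \<in> graph_class directed V G0 F"
    and "{v \<in> V. Nset directed V G0 F G v \<noteq> {}} \<noteq> {}"
  shows "lossless_spmf (sampler_walk directed V G0 F G) \<and>
         (\<integral>\<^sup>+ W. ennreal (real (length W - 1)) \<partial>measure_spmf (sampler_walk directed V G0 F G)) < \<infinity>"
proof -
  interpret sampler_setting directed V G0 G F
    using assms(1,5) by unfold_locales
  obtain B where "\<And>w0. w0 \<in> V \<Longrightarrow> Nset directed V G0 F G w0 \<noteq> {} \<Longrightarrow>
      lossless_spmf (sampler_loop directed V G0 F w0 G None w0 [w0]) \<and>
      (\<integral>\<^sup>+ W. ennreal (real (length W - 1)) \<partial>measure_spmf (sampler_loop directed V G0 F w0 G None w0 [w0]))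
        \<le> ennreal B"
    using sampler_loop_lossless_length_le by blast
  then show ?thesis
    unfolding sampler_walk_def using assms(1,6)
    by (intro lossless_bind_nn_integral_finite) auto
qed

end
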